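(* Let $Z$ be a unit Fréchet random variable, i.e. $\Pr(Z \le z) = \exp(-1/z)$ for $z > 0$. Let $\mathbf A = (A_1, \ldots, A_d)$ be a random vector in $\mathbb R^d$, independent of $Z$, such that $0 < \mathbb E[\max(A_j, 0)] < \infty$ for every $j \in \{1, \ldots, d\}$. Put $\mathbf X = (X_1, \ldots, X_d) = (A_1 Z, \ldots, A_d Z)$. Then for every $\mathbf x = (x_1, \ldots, x_d) \in (0, \infty)^d$, \[ \lim_{n \to \infty} \Pr[ X_1 \le n x_1, \ldots, X_d \le n x_d ]^n = \exp\bigl\{ - \mathbb E[ \max(A_1/x_1, \ldots, A_d/x_d, 0) ] \bigr\}. \] *)

theory Defs
  imports "HOL-Probability.Probability"
begin

end

theory Submission
  imports Defs "HOL-Real_Asymp.Real_Asymp"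
begin

(* Put B = max (max_j A_j / x_j, 0), a nonnegative integrable random variable.
   Since Z > 0 almost surely, the event {A_j Z <= n x_j for all j} coincides
   a.s. with {Z B <= n}.  Conditioning on the independent B and using the
   Frechet law gives  P(Z B <= t) = E[exp (-B/t)],  so with
   c_n = E[n (1 - exp (-B/n))] the probability equals 1 - c_n / n.
   Dominated convergence (0 <= n (1 - exp (-b/n)) <= b) yields c_n --> E[B],
   and an elementary limit turns (1 - c_n/n)^n into exp (-E[B]). *)

section \<open>Elementary limits\<close>

lemma scaled_one_minus_exp_bounds:
  fixes b t :: real
  assumes "b \<ge> 0" "t \<ge> 0"
  shows "0 \<le> t * (1 - exp (- b / t))" and "t * (1 - exp (- b / t)) \<le> b"
proof -
  show "0 \<le> t * (1 - exp (- b / t))"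
    using assms by (intro mult_nonneg_nonneg) auto
  show "t * (1 - exp (- b / t)) \<le> b"
  proof (cases "t = 0")
    case False
    have "1 - exp (- b / t) \<le> b / t"
      using exp_ge_add_one_self[of "- b / t"] by simp
    then have "t * (1 - exp (- b / t)) \<le> t * (b / t)"
      using assms by (intro mult_left_mono) auto
    then show ?thesis using False by simp
  qed (use assms in simp)
qed

lemma scaled_one_minus_exp_tendsto:
  fixes b :: real
  assumes "b \<ge> 0"
  shows "(\<lambda>n::nat. real n * (1 - exp (- b / real n))) \<longlonglongrightarrow> b"
proof (cases "b = 0")
  case False
  with assms have "b > 0" by simp
  then show ?thesis by real_asymp
qed simp

text \<open>A variable-rate version of (1 - L/n)^n --> exp(-L): if c_n --> L then
  (1 - c_n/n)^n --> exp(-L).  Proved by squeezing n ln p_n between -c_n/p_n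
  and -c_n, using 1 - 1/p <= ln p <= p - 1.\<close>
lemma power_one_minus_div_tendsto_exp:
  fixes c p :: "nat \<Rightarrow> real"
  assumes c: "c \<longlonglongrightarrow> L" and p: "\<And>n. n \<ge> 1 \<Longrightarrow> p n = 1 - c n / real n"
  shows "(\<lambda>n. p n ^ n) \<longlonglongrightarrow> exp (- L)"
proof -
  have "(\<lambda>n. 1 - c n * inverse (real n)) \<longlonglongrightarrow> 1 - L * 0"
    by (intro tendsto_intros c lim_inverse_n)
  then have "(\<lambda>n. 1 - c n / real n) \<longlonglongrightarrow> 1"
    by (simp add: divide_inverse)
  then have p_lim: "p \<longlonglongrightarrow> 1"
    by (rule Lim_transform_eventually) (auto simp: p eventually_sequentially intro!: exI[of _ 1])
  have large: "eventually (\<lambda>n. p n > 0 \<and> n \<ge> 1) sequentially"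
    by (intro eventually_conj order_tendstoD(1)[OF p_lim] eventually_ge_at_top) simp
  have c_eq: "c n = real n * (1 - p n)" if "n \<ge> 1" for n
    using p[OF that] that by (simp add: field_simps)
  have log_lim: "(\<lambda>n. real n * ln (p n)) \<longlonglongrightarrow> - L"
  proof (rule tendsto_sandwich)
    show "eventually (\<lambda>n. - c n / p n \<le> real n * ln (p n)) sequentially"
      using large
    proof (rule eventually_mono)
      fix n assume n: "p n > 0 \<and> n \<ge> 1"
      have "1 - 1 / p n \<le> ln (p n)"
        using ln_le_minus_one[of "1 / p n"] n by (simp add: ln_div)
      then have "real n * (1 - 1 / p n) \<le> real n * ln (p n)"
        by (intro mult_left_mono) auto
      then show "- c n / p n \<le> real n * ln (p n)"
        using n by (simp add: c_eq field_simps)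
    qed
    show "eventually (\<lambda>n. real n * ln (p n) \<le> - c n) sequentially"
      using large
    proof (rule eventually_mono)
      fix n assume n: "p n > 0 \<and> n \<ge> 1"
      have "real n * ln (p n) \<le> real n * (p n - 1)"
        using ln_le_minus_one[of "p n"] n by (intro mult_left_mono) auto
      then show "real n * ln (p n) \<le> - c n"
        using n by (simp add: c_eq algebra_simps)
    qed
    show "(\<lambda>n. - c n / p n) \<longlonglongrightarrow> - L"
      using tendsto_divide[OF tendsto_minus[OF c] p_lim] by simp
    show "(\<lambda>n. - c n) \<longlonglongrightarrow> - L"
      using c by (rule tendsto_minus)
  qed
  have "(\<lambda>n. exp (real n * ln (p n))) \<longlonglongrightarrow> exp (- L)"
    using log_lim by (rule tendsto_exp)
  then show ?thesis
    by (rule Lim_transform_eventually)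
       (use large in \<open>auto elim!: eventually_mono simp: exp_of_nat_mult\<close>)
qed

section \<open>The functional a \<mapsto> max (max_j a_j / x_j, 0)\<close>

text \<open>pos_max_ratio x a is the (positive part of the) smallest scale s such
  that a \<le> s x coordinatewise; for a = A it is the random scale B of the proof.\<close>
definition pos_max_ratio :: "real ^ 'd \<Rightarrow> real ^ 'd \<Rightarrow> real" where
  "pos_max_ratio x a = max (Max (range (\<lambda>j. a $ j / x $ j))) 0"

lemma pos_max_ratio_nonneg: "pos_max_ratio x a \<ge> 0"
  by (simp add: pos_max_ratio_def)

lemma borel_measurable_pos_max_ratio [measurable]:
  "pos_max_ratio x \<in> borel_measurable borel"
  unfolding pos_max_ratio_def by measurable

lemma pos_max_ratio_le_iff:
  "t \<ge> 0 \<Longrightarrow> pos_max_ratio x a \<le> t \<longleftrightarrow> (\<forall>j. a $ j / x $ j \<le> t)"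
  unfolding pos_max_ratio_def by (auto simp: Max_le_iff)

lemma all_le_iff_pos_max_ratio:
  assumes x_pos: "\<And>j. x $ j > 0" and "z > 0" "t \<ge> 0"
  shows "(\<forall>j. a $ j * z \<le> t * x $ j) \<longleftrightarrow> z * pos_max_ratio x a \<le> t"
proof -
  have "z * pos_max_ratio x a \<le> t \<longleftrightarrow> pos_max_ratio x a \<le> t / z"
    using \<open>z > 0\<close> by (simp add: pos_le_divide_eq mult.commute)
  also have "\<dots> \<longleftrightarrow> (\<forall>j. a $ j / x $ j \<le> t / z)"
    using assms by (simp add: pos_max_ratio_le_iff)
  also have "\<dots> \<longleftrightarrow> (\<forall>j. a $ j * z \<le> t * x $ j)"
    using \<open>z > 0\<close> x_pos by (simp add: field_simps)
  finally show ?thesis by simp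
qed

lemma pos_max_ratio_le_sum:
  assumes x_pos: "\<And>j. x $ j > 0"
  shows "pos_max_ratio x a \<le> (\<Sum>j\<in>UNIV. max (a $ j) 0 / x $ j)"
proof -
  have nonneg: "0 \<le> max (a $ j) 0 / x $ j" for j
    using x_pos[of j] by simp
  have "a $ j / x $ j \<le> (\<Sum>j\<in>UNIV. max (a $ j) 0 / x $ j)" for j
  proof -
    have "a $ j / x $ j \<le> max (a $ j) 0 / x $ j"
      using x_pos[of j] by (intro divide_right_mono) auto
    also have "\<dots> \<le> (\<Sum>j\<in>UNIV. max (a $ j) 0 / x $ j)"
      by (rule member_le_sum) (auto simp: nonneg)
    finally show ?thesis .
  qed
  moreover have "0 \<le> (\<Sum>j\<in>UNIV. max (a $ j) 0 / x $ j)"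
    by (intro sum_nonneg nonneg)
  ultimately show ?thesis
    by (simp add: pos_max_ratio_le_iff)
qed

lemma integrable_pos_max_ratio:
  fixes A :: "'a \<Rightarrow> real ^ 'd"
  assumes [measurable]: "A \<in> borel_measurable M"
    and A_int: "\<And>j. integrable M (\<lambda>\<omega>. max (A \<omega> $ j) 0)"
    and x_pos: "\<And>j. x $ j > 0"
  shows "integrable M (\<lambda>\<omega>. pos_max_ratio x (A \<omega>))"
proof (rule Bochner_Integration.integrable_bound)
  show "integrable M (\<lambda>\<omega>. \<Sum>j\<in>UNIV. max (A \<omega> $ j) 0 / x $ j)"
    by (intro Bochner_Integration.integrable_sum Bochner_Integration.integrable_divide A_int)
  show "AE \<omega> in M. norm (pos_max_ratio x (A \<omega>)) \<le> norm (\<Sum>j\<in>UNIV. max (A \<omega> $ j) 0 / x $ j)"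
  proof (intro AE_I2)
    fix \<omega>
    have "pos_max_ratio x (A \<omega>) \<le> (\<Sum>j\<in>UNIV. max (A \<omega> $ j) 0 / x $ j)"
      using x_pos by (rule pos_max_ratio_le_sum)
    then show "norm (pos_max_ratio x (A \<omega>)) \<le> norm (\<Sum>j\<in>UNIV. max (A \<omega> $ j) 0 / x $ j)"
      using pos_max_ratio_nonneg[of x "A \<omega>"] by simp
  qed
qed measurable

section \<open>A unit Frechet variable times an independent nonnegative scale\<close>

context prob_space
begin

text \<open>Independence of the sigma-algebras generated by X and Y passes to X and
  any measurable function of Y, since g o Y generates a smaller sigma-algebra.\<close>
lemma indep_var_generated_compose:
  assumes indep: "indep_set (sigma_sets (space M) {X -` C \<inter> space M | C. C \<in> sets S})
      (sigma_sets (space M) {Y -` C \<inter> space M | C. C \<in> sets N})"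
    and X: "random_variable S X" and Y: "random_variable N Y" and g: "g \<in> measurable N T"
  shows "indep_var S X T (\<lambda>\<omega>. g (Y \<omega>))"
proof -
  have "{(\<lambda>\<omega>. g (Y \<omega>)) -` C \<inter> space M | C. C \<in> sets T}
      \<subseteq> {Y -` C \<inter> space M | C. C \<in> sets N}"
  proof safe
    fix C assume "C \<in> sets T"
    then have "g -` C \<inter> space N \<in> sets N"
      using g by (rule measurable_sets[rotated])
    moreover have "(\<lambda>\<omega>. g (Y \<omega>)) -` C \<inter> space M = Y -` (g -` C \<inter> space N) \<inter> space M"
      using measurable_space[OF Y] by auto
    ultimately show "\<exists>C'. (\<lambda>\<omega>. g (Y \<omega>)) -` C \<inter> space M = Y -` C' \<inter> space M \<and> C' \<in> sets N"
      by blast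
  qed
  then have "sigma_sets (space M) {(\<lambda>\<omega>. g (Y \<omega>)) -` C \<inter> space M | C. C \<in> sets T}
      \<subseteq> sigma_sets (space M) {Y -` C \<inter> space M | C. C \<in> sets N}"
    by (rule sigma_sets_mono')
  then have "indep_set (sigma_sets (space M) {X -` C \<inter> space M | C. C \<in> sets S})
      (sigma_sets (space M) {(\<lambda>\<omega>. g (Y \<omega>)) -` C \<inter> space M | C. C \<in> sets T})"
    using indep unfolding indep_sets2_eq by blast
  then show ?thesis
    using X Y g by (simp add: indep_var_eq)
qed

text \<open>A unit Frechet variable is almost surely positive: P(Z \<le> 0) \<le> P(Z \<le> 1/k) = exp(-k).\<close>
lemma frechet_AE_pos:
  assumes [measurable]: "Z \<in> borel_measurable M"
    and frechet: "\<And>z. z > 0 \<Longrightarrow> prob {\<omega> \<in> space M. Z \<omega> \<le> z} = exp (- 1 / z)"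
  shows "AE \<omega> in M. Z \<omega> > 0"
proof -
  have bound: "prob {\<omega> \<in> space M. Z \<omega> \<le> 0} \<le> exp (- real (Suc k))" for k
  proof -
    have "prob {\<omega> \<in> space M. Z \<omega> \<le> 0} \<le> prob {\<omega> \<in> space M. Z \<omega> \<le> 1 / real (Suc k)}"
      by (rule finite_measure_mono) (auto intro: order_trans[of _ 0])
    also have "\<dots> = exp (- real (Suc k))"
      by (subst frechet) auto
    finally show ?thesis .
  qed
  have "(\<lambda>k. exp (- real (Suc k))) \<longlonglongrightarrow> 0"
    by real_asymp
  then have "prob {\<omega> \<in> space M. Z \<omega> \<le> 0} \<le> 0"
    by (rule LIMSEQ_le_const) (use bound in auto)
  then have "{\<omega> \<in> space M. Z \<omega> \<le> 0} \<in> null_sets M"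
    by (intro null_setsI) (simp_all add: emeasure_eq_measure measure_le_0_iff)
  then have "AE \<omega> in M. \<omega> \<notin> {\<omega> \<in> space M. Z \<omega> \<le> 0}"
    by (rule AE_not_in)
  then show ?thesis
    by (auto elim: AE_mp)
qed

lemma threshold_event_eq_pos_max_ratio:
  fixes A :: "'a \<Rightarrow> real ^ 'd"
  assumes Z_rv [measurable]: "Z \<in> borel_measurable M"
    and A_rv [measurable]: "A \<in> borel_measurable M"
    and Z_pos: "AE \<omega> in M. Z \<omega> > 0" and x_pos: "\<And>j. x $ j > 0" and "t \<ge> 0"
  shows "prob {\<omega> \<in> space M. \<forall>j. A \<omega> $ j * Z \<omega> \<le> t * x $ j}
      = prob {\<omega> \<in> space M. Z \<omega> * pos_max_ratio x (A \<omega>) \<le> t}"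
proof (rule measure_eq_AE)
  show "AE \<omega> in M. (\<omega> \<in> {\<omega> \<in> space M. \<forall>j. A \<omega> $ j * Z \<omega> \<le> t * x $ j})
      = (\<omega> \<in> {\<omega> \<in> space M. Z \<omega> * pos_max_ratio x (A \<omega>) \<le> t})"
    using Z_pos by eventually_elim (simp add: all_le_iff_pos_max_ratio x_pos \<open>t \<ge> 0\<close>)
  have "{\<omega> \<in> space M. \<forall>j. A \<omega> $ j * Z \<omega> \<le> t * x $ j}
      = {\<omega> \<in> space M. \<forall>j\<in>UNIV. A \<omega> $ j * Z \<omega> \<le> t * x $ j}" by simp
  also have "\<dots> \<in> sets M"
    by measurable (auto intro: Z_rv measurable_compose[OF A_rv borel_measurable_nth])
  finally show "{\<omega> \<in> space M. \<forall>j. A \<omega> $ j * Z \<omega> \<le> t * x $ j} \<in> sets M" .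
  show "{\<omega> \<in> space M. Z \<omega> * pos_max_ratio x (A \<omega>) \<le> t} \<in> sets M"
    by measurable
qed

lemma frechet_scale_le:
  assumes frechet: "\<And>z. z > 0 \<Longrightarrow> prob {\<omega> \<in> space M. Z \<omega> \<le> z} = exp (- 1 / z)"
    and "b \<ge> 0" "t > 0"
  shows "prob {\<omega> \<in> space M. Z \<omega> * b \<le> t} = exp (- b / t)"
proof (cases "b = 0")
  case True
  then show ?thesis using \<open>t > 0\<close> by (simp add: prob_space)
next
  case False
  with \<open>b \<ge> 0\<close> have "b > 0" by simp
  then have "{\<omega> \<in> space M. Z \<omega> * b \<le> t} = {\<omega> \<in> space M. Z \<omega> \<le> t / b}"
    by (auto simp: pos_le_divide_eq)
  then show ?thesis
    using \<open>b > 0\<close> \<open>t > 0\<close> by (simp add: frechet)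
qed

text \<open>The joint law of (Z, B) is the product of the
  marginals, and Tonelli integrates the Frechet probability over B.\<close>
lemma frechet_scale_mixture:
  assumes indep: "indep_var borel Z borel B"
    and frechet: "\<And>z. z > 0 \<Longrightarrow> prob {\<omega> \<in> space M. Z \<omega> \<le> z} = exp (- 1 / z)"
    and B_nonneg: "\<And>\<omega>. \<omega> \<in> space M \<Longrightarrow> B \<omega> \<ge> 0"
    and "t > 0"
  shows "prob {\<omega> \<in> space M. Z \<omega> * B \<omega> \<le> t} = (\<integral>\<omega>. exp (- B \<omega> / t) \<partial>M)"
proof -
  have [measurable]: "Z \<in> borel_measurable M" "B \<in> borel_measurable M"
    using indep by (auto dest: indep_var_rv1 indep_var_rv2)
  interpret DZ: prob_space "distr M borel Z" by (rule prob_space_distr) simp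
  interpret DB: prob_space "distr M borel B" by (rule prob_space_distr) simp
  interpret P: pair_prob_space "distr M borel Z" "distr M borel B" ..
  have joint: "distr M borel Z \<Otimes>\<^sub>M distr M borel B = distr M (borel \<Otimes>\<^sub>M borel) (\<lambda>\<omega>. (Z \<omega>, B \<omega>))"
    using indep by (simp add: indep_var_distribution_eq)
  define S where "S = {p :: real \<times> real. fst p * snd p \<le> t}"
  have "S = {p \<in> space (borel \<Otimes>\<^sub>M borel). fst p * snd p \<le> t}"
    by (auto simp: S_def space_pair_measure)
  also have "\<dots> \<in> sets (borel \<Otimes>\<^sub>M borel)" by measurable
  finally have S: "S \<in> sets (borel \<Otimes>\<^sub>M borel)" .
  have fiber: "emeasure (distr M borel Z) ((\<lambda>z. (z, b)) -` S) = ennreal (exp (- b / t))"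
    if "b \<ge> 0" for b
  proof -
    have "emeasure (distr M borel Z) ((\<lambda>z. (z, b)) -` S) = emeasure M {\<omega> \<in> space M. Z \<omega> * b \<le> t}"
      by (subst emeasure_distr) (auto simp: S_def intro!: arg_cong[where f="emeasure M"])
    then show ?thesis
      using frechet_scale_le[OF frechet that \<open>t > 0\<close>] by (simp add: emeasure_eq_measure)
  qed
  have exp_int: "integrable M (\<lambda>\<omega>. exp (- B \<omega> / t))"
    by (rule integrable_const_bound[where B=1]) (use B_nonneg \<open>t > 0\<close> in auto)
  have "emeasure M {\<omega> \<in> space M. Z \<omega> * B \<omega> \<le> t}
      = emeasure (distr M (borel \<Otimes>\<^sub>M borel) (\<lambda>\<omega>. (Z \<omega>, B \<omega>))) S"
    using S by (subst emeasure_distr) (auto simp: S_def intro!: arg_cong[where f="emeasure M"])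
  also have "\<dots> = (\<integral>\<^sup>+b. emeasure (distr M borel Z) ((\<lambda>z. (z, b)) -` S) \<partial>distr M borel B)"
    using S by (simp add: joint[symmetric] P.emeasure_pair_measure_alt2)
  also have "\<dots> = (\<integral>\<^sup>+b. ennreal (exp (- b / t)) \<partial>distr M borel B)"
  proof (rule nn_integral_cong_AE)
    have "AE b in distr M borel B. b \<ge> 0"
      by (subst AE_distr_iff) (auto simp: B_nonneg)
    then show "AE b in distr M borel B.
        emeasure (distr M borel Z) ((\<lambda>z. (z, b)) -` S) = ennreal (exp (- b / t))"
      by eventually_elim (rule fiber)
  qed
  also have "\<dots> = (\<integral>\<^sup>+\<omega>. ennreal (exp (- B \<omega> / t)) \<partial>M)"
    by (rule nn_integral_distr) measurable
  also have "\<dots> = ennreal (\<integral>\<omega>. exp (- B \<omega> / t) \<partial>M)"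
    by (rule nn_integral_eq_integral[OF exp_int]) simp
  finally show ?thesis
    by (simp add: emeasure_eq_measure)
qed

lemma integral_scaled_one_minus_exp_tendsto:
  assumes B_int: "integrable M B" and B_nonneg: "\<And>\<omega>. \<omega> \<in> space M \<Longrightarrow> B \<omega> \<ge> 0"
  shows "(\<lambda>n::nat. \<integral>\<omega>. real n * (1 - exp (- B \<omega> / real n)) \<partial>M) \<longlonglongrightarrow> (\<integral>\<omega>. B \<omega> \<partial>M)"
proof (rule integral_dominated_convergence[where w = B])
  show "AE \<omega> in M. (\<lambda>n. real n * (1 - exp (- B \<omega> / real n))) \<longlonglongrightarrow> B \<omega>"
    using B_nonneg by (intro AE_I2 scaled_one_minus_exp_tendsto)
  show "AE \<omega> in M. norm (real n * (1 - exp (- B \<omega> / real n))) \<le> B \<omega>" for n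
    using B_nonneg scaled_one_minus_exp_bounds[of "B _" "real n"] by (intro AE_I2) auto
qed (use B_int in auto)

lemma frechet_scale_mixture_power_tendsto:
  assumes indep: "indep_var borel Z borel B"
    and frechet: "\<And>z. z > 0 \<Longrightarrow> prob {\<omega> \<in> space M. Z \<omega> \<le> z} = exp (- 1 / z)"
    and B_int: "integrable M B" and B_nonneg: "\<And>\<omega>. \<omega> \<in> space M \<Longrightarrow> B \<omega> \<ge> 0"
  shows "(\<lambda>n::nat. prob {\<omega> \<in> space M. Z \<omega> * B \<omega> \<le> real n} ^ n) \<longlonglongrightarrow> exp (- (\<integral>\<omega>. B \<omega> \<partial>M))"
proof (rule power_one_minus_div_tendsto_exp)
  show "(\<lambda>n::nat. \<integral>\<omega>. real n * (1 - exp (- B \<omega> / real n)) \<partial>M) \<longlonglongrightarrow> (\<integral>\<omega>. B \<omega> \<partial>M)"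
    using B_int B_nonneg by (rule integral_scaled_one_minus_exp_tendsto)
  fix n :: nat assume "n \<ge> 1"
  then have n: "real n > 0" by simp
  have [measurable]: "B \<in> borel_measurable M"
    using B_int by auto
  have exp_int: "integrable M (\<lambda>\<omega>. exp (- B \<omega> / real n))"
    by (rule integrable_const_bound[where B=1]) (use B_nonneg n in auto)
  have "(\<integral>\<omega>. real n * (1 - exp (- B \<omega> / real n)) \<partial>M) / real n = 1 - (\<integral>\<omega>. exp (- B \<omega> / real n) \<partial>M)"
    using n exp_int by (simp add: prob_space)
  then show "prob {\<omega> \<in> space M. Z \<omega> * B \<omega> \<le> real n}
      = 1 - (\<integral>\<omega>. real n * (1 - exp (- B \<omega> / real n)) \<partial>M) / real n"
    using frechet_scale_mixture[OF indep frechet B_nonneg n] by simp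
qed

end

theorem mainTheorem1:
  fixes M :: "'a measure" and Z :: "'a \<Rightarrow> real" and A :: "'a \<Rightarrow> real ^ 'd"
    and x :: "real ^ 'd"
  assumes "prob_space M"
    and Z_rv: "Z \<in> borel_measurable M"
    and A_rv: "A \<in> borel_measurable M"
    and Z_frechet: "\<And>z. z > 0 \<Longrightarrow> measure M {\<omega> \<in> space M. Z \<omega> \<le> z} = exp (- 1 / z)"
    and indep: "prob_space.indep_set M
        (sigma_sets (space M) {Z -` B \<inter> space M | B. B \<in> sets (borel :: real measure)})
        (sigma_sets (space M) {A -` B \<inter> space M | B. B \<in> sets (borel :: (real ^ 'd) measure)})"
    and A_int: "\<And>j. integrable M (\<lambda>\<omega>. max (A \<omega> $ j) 0)"
    and A_pos: "\<And>j. (\<integral>\<omega>. max (A \<omega> $ j) 0 \<partial>M) > 0"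
    and x_pos: "\<And>j. x $ j > 0"
  shows "(\<lambda>n::nat. (measure M {\<omega> \<in> space M. \<forall>j. A \<omega> $ j * Z \<omega> \<le> real n * x $ j}) ^ n)
           \<longlonglongrightarrow> exp (- (\<integral>\<omega>. max (Max (range (\<lambda>j. A \<omega> $ j / x $ j))) 0 \<partial>M))"
proof -
  interpret prob_space M by fact
  define B where "B \<omega> = pos_max_ratio x (A \<omega>)" for \<omega>
  have B_indep: "indep_var borel Z borel B"
    unfolding B_def using indep Z_rv A_rv borel_measurable_pos_max_ratio
    by (rule indep_var_generated_compose)
  have B_int: "integrable M B"
    unfolding B_def using A_rv A_int x_pos by (rule integrable_pos_max_ratio)
  have Z_pos: "AE \<omega> in M. Z \<omega> > 0"
    using Z_rv Z_frechet by (rule frechet_AE_pos)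
  have events: "prob {\<omega> \<in> space M. \<forall>j. A \<omega> $ j * Z \<omega> \<le> real n * x $ j}
      = prob {\<omega> \<in> space M. Z \<omega> * B \<omega> \<le> real n}" for n :: nat
    unfolding B_def using Z_rv A_rv Z_pos x_pos
    by (rule threshold_event_eq_pos_max_ratio) simp
  have "(\<lambda>n::nat. prob {\<omega> \<in> space M. Z \<omega> * B \<omega> \<le> real n} ^ n) \<longlonglongrightarrow> exp (- (\<integral>\<omega>. B \<omega> \<partial>M))"
    using B_indep Z_frechet B_int pos_max_ratio_nonneg unfolding B_def
    by (rule frechet_scale_mixture_power_tendsto)
  then show ?thesis
    by (simp add: events B_def pos_max_ratio_def)
qed

end
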